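(* Let $P\ge4$ be even and $\gamma>0$. For each $\beta'>0$ let $(\bar m,\bar q,\bar p)=(\bar m(\beta'),\bar q(\beta'),\bar p(\beta'))$ be a solution of $$\bar m=\mathbb E_x\tanh\Big[\tfrac P2\beta'\bar m^{P-1}+x\sqrt{\beta'\gamma\tfrac P2\bar p\,\bar q^{P/2-1}}\Big],\quad \bar q=\mathbb E_x\tanh^2\Big[\tfrac P2\beta'\bar m^{P-1}+x\sqrt{\beta'\gamma\tfrac P2\bar p\,\bar q^{P/2-1}}\Big],\quad \bar p=\beta'\bar q^{P/2},$$ where $x$ is a standard Gaussian. Assume that, as $\beta'\to\infty$, $\bar m(\beta')\to m_\infty$ and $\beta'(1-\bar q(\beta'))$ converges to a finite limit. Then $$m_\infty=\mathrm{erf}\Big[\tfrac12\sqrt{\tfrac P\gamma}\,m_\infty^{P-1}\Big].$$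
   Context: These are the replica-symmetric self-consistency equations of the dense Hebbian network (with $\beta'=2\beta/P!$ the rescaled inverse temperature and $\gamma$ the storage load); $\mathrm{erf}$ is the error function. *)

theory Defs
  imports "HOL-Probability.Probability"
begin

definition gauss_E :: "(real \<Rightarrow> real) \<Rightarrow> real" where
  "gauss_E f = (LINT x|lborel. std_normal_density x * f x)"

definition erf :: "real \<Rightarrow> real" where
  "erf z = 2 / sqrt pi * (LBINT t=0..z. exp (- (t\<^sup>2)))"

definition rs_arg :: "nat \<Rightarrow> real \<Rightarrow> real \<Rightarrow> real \<Rightarrow> real \<Rightarrow> real \<Rightarrow> real \<Rightarrow> real" where
  "rs_arg P \<gamma> b m q p x =
     real P / 2 * b * m ^ (P - 1) + x * sqrt (b * \<gamma> * (real P / 2) * p * q ^ (P div 2 - 1))"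

end

theory Submission
  imports Defs
begin

text \<open>
  Since \<beta>'(1 - q) converges, q tends to 1. Substituting p = \<beta>' q^(P/2), the argument of tanh
  becomes \<beta>' (A + x B) with A \<longrightarrow> (P/2) m_inf^(P-1) and B \<longrightarrow> sqrt (\<gamma> P/2) > 0.
  Hence for almost every x the integrand tends to sgn (x + A/B), and by dominated convergence
  m_inf = E sgn (x + A/B) = Pr (|x| < A/B) = erf (A / (B sqrt 2)).
\<close>

lemma interval_integral_has_real_derivative:
  fixes f :: "real \<Rightarrow> real" and c :: real
  assumes "continuous_on UNIV f"
  shows "((\<lambda>u. LBINT y=c..u. f y) has_real_derivative f x) (at x)"
proof -
  define a where "a = min c x - 1"
  define b where "b = max c x + 1"
  have "((\<lambda>u. LBINT y=c..u. f y) has_vector_derivative f x) (at x within {a..b})"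
    unfolding a_def b_def by (intro interval_integral_FTC2 continuous_on_subset[OF assms]) auto
  then have "((\<lambda>u. LBINT y=c..u. f y) has_vector_derivative f x) (at x within {a<..<b})"
    by (rule has_vector_derivative_within_subset) auto
  then have "((\<lambda>u. LBINT y=c..u. f y) has_vector_derivative f x) (at x)"
    by (subst (asm) has_vector_derivative_within_open) (auto simp: a_def b_def)
  then show ?thesis
    by (simp add: has_real_derivative_iff_has_vector_derivative)
qed

lemma erf_has_real_derivative: "(erf has_real_derivative 2 / sqrt pi * exp (- x\<^sup>2)) (at x)"
  unfolding erf_def[abs_def] zero_ereal_def
  by (intro DERIV_cmult interval_integral_has_real_derivative continuous_intros)

lemma erf_0: "erf 0 = 0"
  by (simp add: erf_def zero_ereal_def)

lemma erf_minus: "erf (- x) = - erf x"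
proof -
  have "((\<lambda>x. erf (- x) + erf x) has_real_derivative 0) (at y)" for y
    using DERIV_add[OF DERIV_chain2[OF erf_has_real_derivative DERIV_minus[OF DERIV_ident]]
        erf_has_real_derivative]
    by simp
  then have "erf (- x) + erf x = erf (- 0) + erf 0" using DERIV_isconst_all by blast
  then show ?thesis by (simp add: erf_0)
qed

lemma erf_scaled_has_real_derivative:
  "((\<lambda>x. erf (x / sqrt 2) / 2) has_real_derivative std_normal_density x) (at x)"
proof -
  have "((\<lambda>x. erf (x / sqrt 2) / 2) has_real_derivative
      2 / sqrt pi * exp (- (x / sqrt 2)\<^sup>2) * (1 / sqrt 2) / 2) (at x)"
    using DERIV_chain2[OF erf_has_real_derivative DERIV_cdivide[OF DERIV_ident, of "sqrt 2"]]
    by (intro DERIV_cdivide) simp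
  moreover have "2 / sqrt pi * exp (- (x / sqrt 2)\<^sup>2) * (1 / sqrt 2) / 2 = std_normal_density x"
    by (simp add: std_normal_density_def power_divide real_sqrt_mult field_simps)
  ultimately show ?thesis by simp
qed

lemma interval_integral_std_normal_density_symmetric:
  "(LBINT x=-a..a. std_normal_density x) = erf (a / sqrt 2)"
proof -
  have continuous: "continuous_on UNIV std_normal_density"
    unfolding std_normal_density_def by (intro continuous_intros) simp
  have "((\<lambda>x. erf (x / sqrt 2) / 2) has_vector_derivative std_normal_density x) (at x)" for x
    using erf_scaled_has_real_derivative by (simp add: has_real_derivative_iff_has_vector_derivative)
  then have "(LBINT x=-a..a. std_normal_density x) = erf (a / sqrt 2) / 2 - erf (- a / sqrt 2) / 2"
    by (intro interval_integral_FTC_finite continuous_on_subset[OF continuous])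
      (auto intro: has_vector_derivative_at_within)
  then show ?thesis by (simp add: erf_minus)
qed

lemma integral_std_normal_density_sgn:
  "(\<integral>x. std_normal_density x * sgn (x + c) \<partial>lborel) = erf (c / sqrt 2)"
proof -
  let ?H = "\<integral>x. std_normal_density x * sgn (x + c) \<partial>lborel"
  let ?open = "\<lambda>x. indicator {-\<bar>c\<bar><..<\<bar>c\<bar>} x *\<^sub>R std_normal_density x"
  let ?closed = "\<lambda>x. indicator {-\<bar>c\<bar>..\<bar>c\<bar>} x *\<^sub>R std_normal_density x"
  have integrable_sgn: "integrable lborel (\<lambda>x. std_normal_density x * sgn (g x))"
    if "g \<in> borel_measurable lborel" for g :: "real \<Rightarrow> real"
    using that
    by (intro Bochner_Integration.integrable_bound[OF integrable_normal_density])
      (auto simp: abs_mult sgn_real_def)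
  have "std_normal_density (- x) = std_normal_density x" for x
    by (simp add: std_normal_density_def)
  then have reflect: "?H = (\<integral>x. std_normal_density x * sgn (c - x) \<partial>lborel)"
    using lborel_integral_real_affine[of "-1" "\<lambda>x. std_normal_density x * sgn (x + c)" 0]
    by simp
  have open_closed: "integral\<^sup>L lborel ?open = erf (\<bar>c\<bar> / sqrt 2)"
    "integral\<^sup>L lborel ?closed = erf (\<bar>c\<bar> / sqrt 2)"
    using interval_integral_Ioo[of "-\<bar>c\<bar>" "\<bar>c\<bar>" std_normal_density]
      interval_integral_Icc[of "-\<bar>c\<bar>" "\<bar>c\<bar>" std_normal_density]
      interval_integral_std_normal_density_symmetric[of "\<bar>c\<bar>"]
    unfolding set_lebesgue_integral_def by simp_all
  \<comment> \<open>Averaging the open and the closed indicator makes the identity hold also at x = \<plusminus>c.\<close>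
  have sgn_sum: "sgn (x + c) + sgn (c - x) =
      sgn c * (indicator {-\<bar>c\<bar><..<\<bar>c\<bar>} x + indicator {-\<bar>c\<bar>..\<bar>c\<bar>} x)" for x :: real
    by (simp add: indicator_def sgn_real_def abs_real_def)
  have "2 * ?H = ?H + (\<integral>x. std_normal_density x * sgn (c - x) \<partial>lborel)"
    using reflect by simp
  also have "\<dots> = (\<integral>x. std_normal_density x * sgn (x + c) +
      std_normal_density x * sgn (c - x) \<partial>lborel)"
    by (intro Bochner_Integration.integral_add[symmetric] integrable_sgn) simp_all
  also have "\<dots> = (\<integral>x. sgn c * (?open x + ?closed x) \<partial>lborel)"
    by (intro Bochner_Integration.integral_cong refl)
      (simp only: distrib_left[symmetric] sgn_sum, simp add: algebra_simps)
  also have "\<dots> = sgn c * (integral\<^sup>L lborel ?open + integral\<^sup>L lborel ?closed)"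
    using integrable_mult_indicator[OF _ integrable_normal_density]
    by (simp only: Bochner_Integration.integral_mult_right_zero Bochner_Integration.integral_add
        sets_lborel atLeastAtMost_borel greaterThanLessThan_borel)
  also have "\<dots> = 2 * (sgn c * erf (\<bar>c\<bar> / sqrt 2))"
    using open_closed by simp
  also have "sgn c * erf (\<bar>c\<bar> / sqrt 2) = erf (c / sqrt 2)"
    by (cases c "0::real" rule: linorder_cases) (auto simp: erf_minus erf_0)
  finally show ?thesis by simp
qed

lemma tendsto_tanh_mult_at_top:
  fixes C :: "real \<Rightarrow> real"
  assumes "(C \<longlongrightarrow> y) at_top" and "y \<noteq> 0"
  shows "((\<lambda>b. tanh (b * C b)) \<longlongrightarrow> sgn y) at_top"
proof (cases "y > 0")
  case True
  have "filterlim (\<lambda>b. b * C b) at_top at_top"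
    by (rule filterlim_at_top_mult_tendsto_pos[OF assms(1) True filterlim_ident])
  from filterlim_compose[OF tanh_real_at_top this] True show ?thesis by simp
next
  case False
  with assms(2) have "y < 0" by simp
  have "((\<lambda>b. - C b) \<longlongrightarrow> - y) at_top" by (intro tendsto_intros assms(1))
  then have "filterlim (\<lambda>b. b * (- C b)) at_top at_top"
    by (rule filterlim_at_top_mult_tendsto_pos[OF _ _ filterlim_ident]) (use \<open>y < 0\<close> in simp)
  then have "filterlim (\<lambda>b. b * C b) at_bot at_top"
    by (simp add: filterlim_uminus_at_top)
  from filterlim_compose[OF tanh_real_at_bot this] \<open>y < 0\<close> show ?thesis by simp
qed

lemma tendsto_gauss_E_tanh_at_top:
  fixes A B :: "real \<Rightarrow> real"
  assumes A: "(A \<longlongrightarrow> a) at_top" and B: "(B \<longlongrightarrow> c) at_top" and "c > 0"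
  shows "((\<lambda>b. gauss_E (\<lambda>x. tanh (b * (A b + x * B b)))) \<longlongrightarrow> erf (a / (c * sqrt 2))) at_top"
proof -
  define s where "s b x = std_normal_density x * tanh (b * (A b + x * B b))" for b x
  define f where "f x = std_normal_density x * sgn (x + a / c)" for x
  have "((\<lambda>b. integral\<^sup>L lborel (s b)) \<longlongrightarrow> integral\<^sup>L lborel f) at_top"
  proof (rule integral_dominated_convergence_at_top[where w = std_normal_density])
    show "f \<in> borel_measurable lborel" unfolding f_def by measurable
    show "s b \<in> borel_measurable lborel" for b
      unfolding s_def measurable_lborel2 std_normal_density_def
      by (intro borel_measurable_continuous_onI continuous_intros)
        (auto simp: cosh_real_pos[THEN less_imp_neq, symmetric])
    show "integrable lborel std_normal_density" by simp
    have "\<bar>tanh y\<bar> \<le> 1" for y :: real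
      using tanh_real_bounds[of y] by (simp add: abs_le_iff less_imp_le)
    then show "\<forall>\<^sub>F b in at_top. AE x in lborel. norm (s b x) \<le> std_normal_density x"
      by (intro always_eventually allI AE_I2) (simp add: s_def abs_mult mult_left_le)
    show "AE x in lborel. ((\<lambda>b. s b x) \<longlongrightarrow> f x) at_top"
      using AE_lborel_singleton[of "- a / c"]
    proof eventually_elim
      fix x :: real
      assume "x \<noteq> - a / c"
      with \<open>c > 0\<close> have "a + x * c \<noteq> 0" by (auto simp: field_simps)
      have "((\<lambda>b. A b + x * B b) \<longlongrightarrow> a + x * c) at_top" by (intro tendsto_intros A B)
      from tendsto_tanh_mult_at_top[OF this \<open>a + x * c \<noteq> 0\<close>]
      have "((\<lambda>b. s b x) \<longlongrightarrow> std_normal_density x * sgn (a + x * c)) at_top"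
        unfolding s_def by (intro tendsto_intros)
      moreover have "sgn (a + x * c) = sgn (x + a / c)"
        using \<open>c > 0\<close> sgn_mult[of c "x + a / c"] by (simp add: field_simps)
      ultimately show "((\<lambda>b. s b x) \<longlongrightarrow> f x) at_top" by (simp add: f_def)
    qed
  qed
  moreover have "integral\<^sup>L lborel f = erf (a / (c * sqrt 2))"
    unfolding f_def integral_std_normal_density_sgn by simp
  ultimately show ?thesis by (simp add: gauss_E_def s_def[abs_def])
qed

lemma tendsto_0_if_tendsto_mult_at_top:
  fixes f :: "real \<Rightarrow> real"
  assumes "((\<lambda>x. x * f x) \<longlongrightarrow> L) at_top"
  shows "(f \<longlongrightarrow> 0) at_top"
proof -
  have "((\<lambda>x. x * f x * (1 / x)) \<longlongrightarrow> L * 0) at_top"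
    by (intro tendsto_mult assms tendsto_divide_0[OF tendsto_const]
        filterlim_ident filterlim_at_top_imp_at_infinity)
  moreover have "\<forall>\<^sub>F x in at_top. x * f x * (1 / x) = f x"
    using eventually_gt_at_top[of 0] by eventually_elim simp
  ultimately show ?thesis by (simp add: tendsto_cong)
qed

lemma rs_arg_factor:
  assumes "even P" and "P \<ge> 2" and "b > 0" and "p = b * q ^ (P div 2)"
  shows "rs_arg P \<gamma> b m q p x =
    b * (real P / 2 * m ^ (P - 1) + x * sqrt (\<gamma> * (real P / 2) * q ^ (P - 1)))"
proof -
  from assms(1,2) have "P div 2 + (P div 2 - 1) = P - 1" by (elim evenE) auto
  with assms(4) have "b * \<gamma> * (real P / 2) * p * q ^ (P div 2 - 1) =
      b\<^sup>2 * (\<gamma> * (real P / 2) * q ^ (P - 1))"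
    by (simp add: power2_eq_square flip: power_add)
  then have "sqrt (b * \<gamma> * (real P / 2) * p * q ^ (P div 2 - 1)) =
      sqrt (b\<^sup>2) * sqrt (\<gamma> * (real P / 2) * q ^ (P - 1))"
    by (simp only: real_sqrt_mult)
  with \<open>b > 0\<close> have "sqrt (b * \<gamma> * (real P / 2) * p * q ^ (P div 2 - 1)) =
      b * sqrt (\<gamma> * (real P / 2) * q ^ (P - 1))"
    by simp
  then show ?thesis by (simp add: rs_arg_def algebra_simps)
qed

lemma half_divide_sqrt_eq:
  fixes n \<gamma> y :: real
  assumes "n > 0" and "\<gamma> > 0"
  shows "n / 2 * y / (sqrt (\<gamma> * (n / 2)) * sqrt 2) = 1/2 * sqrt (n / \<gamma>) * y"
proof -
  have "sqrt (\<gamma> * (n / 2)) * sqrt 2 = sqrt \<gamma> * sqrt n"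
    by (simp flip: real_sqrt_mult)
  moreover have "sqrt n > 0" "sqrt \<gamma> > 0" using assms by simp_all
  ultimately show ?thesis by (simp add: real_sqrt_divide field_simps)
qed

theorem theorem5:
  fixes P :: nat and \<gamma> :: real
    and m q p :: "real \<Rightarrow> real" and m_inf :: real
  assumes "even P" and "P \<ge> 4" and "\<gamma> > 0"
    and "\<And>b. b > 0 \<Longrightarrow> m b = gauss_E (\<lambda>x. tanh (rs_arg P \<gamma> b (m b) (q b) (p b) x))"
    and "\<And>b. b > 0 \<Longrightarrow> q b = gauss_E (\<lambda>x. (tanh (rs_arg P \<gamma> b (m b) (q b) (p b) x))\<^sup>2)"
    and "\<And>b. b > 0 \<Longrightarrow> p b = b * q b ^ (P div 2)"
    and "(m \<longlongrightarrow> m_inf) at_top"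
    and "\<exists>L. ((\<lambda>b. b * (1 - q b)) \<longlongrightarrow> L) at_top"
  shows "m_inf = erf (1/2 * sqrt (real P / \<gamma>) * m_inf ^ (P - 1))"
proof -
  obtain L where "((\<lambda>b. b * (1 - q b)) \<longlongrightarrow> L) at_top" using assms(8) by blast
  then have "((\<lambda>b. 1 - q b) \<longlongrightarrow> 0) at_top" by (rule tendsto_0_if_tendsto_mult_at_top)
  then have q_lim: "(q \<longlongrightarrow> 1) at_top"
    using tendsto_diff[OF tendsto_const[of 1], of "\<lambda>b. 1 - q b" 0] by simp
  define A where "A b = real P / 2 * m b ^ (P - 1)" for b
  define B where "B b = sqrt (\<gamma> * (real P / 2) * q b ^ (P - 1))" for b
  have A_lim: "(A \<longlongrightarrow> real P / 2 * m_inf ^ (P - 1)) at_top"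
    unfolding A_def by (intro tendsto_intros assms(7))
  have B_lim: "(B \<longlongrightarrow> sqrt (\<gamma> * (real P / 2))) at_top"
    using tendsto_real_sqrt[OF tendsto_mult_left[OF tendsto_power[OF q_lim, of "P - 1"]],
        of "\<gamma> * (real P / 2)"]
    unfolding B_def by simp
  have B_pos: "sqrt (\<gamma> * (real P / 2)) > 0" using assms(2,3) by simp
  have arg: "rs_arg P \<gamma> b (m b) (q b) (p b) x = b * (A b + x * B b)" if "b > 0" for b x
    using assms(1,2) assms(6)[OF that] that by (simp add: rs_arg_factor A_def B_def)
  have "\<forall>\<^sub>F b in at_top. gauss_E (\<lambda>x. tanh (b * (A b + x * B b))) = m b"
    using eventually_gt_at_top[of 0] by eventually_elim (subst assms(4), simp_all add: arg)
  with tendsto_gauss_E_tanh_at_top[OF A_lim B_lim B_pos] have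
    "(m \<longlongrightarrow> erf (real P / 2 * m_inf ^ (P - 1) / (sqrt (\<gamma> * (real P / 2)) * sqrt 2))) at_top"
    by (rule Lim_transform_eventually)
  with assms(7) have "m_inf = erf (real P / 2 * m_inf ^ (P - 1) / (sqrt (\<gamma> * (real P / 2)) * sqrt 2))"
    by (rule tendsto_unique[OF trivial_limit_at_top_linorder])
  also have "real P / 2 * m_inf ^ (P - 1) / (sqrt (\<gamma> * (real P / 2)) * sqrt 2) =
      1/2 * sqrt (real P / \<gamma>) * m_inf ^ (P - 1)"
    using assms(2,3) by (intro half_divide_sqrt_eq) simp_all
  finally show ?thesis .
qed

end
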